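(* Let $d\geq 3$. Let $\mathcal{H}_A=\mathbb{C}^2\otimes\mathbb{C}^d$ and $\mathcal{H}_B=\mathbb{C}^2\otimes\mathbb{C}^d$, and regard $\mathcal{H}_A\otimes\mathcal{H}_B$ as $(\mathbb{C}^2\otimes\mathbb{C}^2)\otimes(\mathbb{C}^d\otimes\mathbb{C}^d)$, where the first pair consists of the qubit factors of Alice and Bob and the second pair of the qudit factors. For $x,y,z\geq 0$ let $$\rho=\tilde Q_2\otimes\tilde Q+x\,P_2\otimes\tilde Q+y\,\tilde Q_2\otimes P+z\,P_2\otimes P.$$ If $z>\frac{2x}{d-2}$, then $\rho$ is entangled (not separable) with respect to the split $\mathcal{H}_A|\mathcal{H}_B$.
   Context: $P_2=|\Phi_2\rangle\langle\Phi_2|$ with $|\Phi_2\rangle=\frac{1}{\sqrt2}(|00\rangle+|11\rangle)\in\mathbb{C}^2\otimes\mathbb{C}^2$, and $\tilde Q_2=(\mathbb{1}-P_2)/3$. $P=|\Phi_d\rangle\langle\Phi_d|$ with $|\Phi_d\rangle=\frac{1}{\sqrt d}\sum_{i=0}^{d-1}|ii\rangle\in\mathbb{C}^d\otimes\mathbb{C}^d$, and $\tilde Q=(\mathbb{1}-P)/(d^2-1)$. A positive semidefinite operator is separable if it is a nonnegative combination of product operators $\rho^A\otimes\rho^B$ with $\rho^A,\rho^B\geq 0$. *)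

theory Defs
  imports Complex_Main "Jordan_Normal_Form.Matrix"
begin

definition psd :: "complex mat \<Rightarrow> bool" where
  "psd M \<longleftrightarrow> dim_row M = dim_col M \<and>
     (\<forall>v :: nat \<Rightarrow> complex.
        let q = (\<Sum>i<dim_row M. \<Sum>j<dim_row M. cnj (v i) * M $$ (i, j) * v j)
        in q \<in> \<real> \<and> 0 \<le> Re q)"

definition kron :: "complex mat \<Rightarrow> complex mat \<Rightarrow> complex mat" where
  "kron A B = mat (dim_row A * dim_row B) (dim_col A * dim_col B)
     (\<lambda>(i, j). A $$ (i div dim_row B, j div dim_col B) * B $$ (i mod dim_row B, j mod dim_col B))"

(* Projector onto the maximally entangled state |Phi_n> = (1/sqrt n) sum_i |ii> in C^n (x) C^n *)
definition maxent_proj :: "nat \<Rightarrow> complex mat" where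
  "maxent_proj n = mat (n * n) (n * n)
     (\<lambda>(r, c). if r mod (Suc n) = 0 \<and> c mod (Suc n) = 0 then 1 / of_nat n else 0)"

definition Qtilde :: "nat \<Rightarrow> complex mat" where
  "Qtilde n = (1 / (of_nat (n * n) - 1)) \<cdot>\<^sub>m (1\<^sub>m (n * n) - maxent_proj n)"

(* Reordering (C^m (x) C^m) (x) (C^n (x) C^n)  ~>  (C^m (x) C^n) (x) (C^m (x) C^n):
   index ((a*n+k)*m+b)*n+l of the target corresponds to (a*m+b)*(n*n)+(k*n+l) of the source *)
definition reorder_idx :: "nat \<Rightarrow> nat \<Rightarrow> nat \<Rightarrow> nat" where
  "reorder_idx m n i =
     (let l = i mod n; b = (i div n) mod m; k = (i div (n * m)) mod n; a = i div (n * m * n)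
      in (a * m + b) * (n * n) + (k * n + l))"

definition reorder :: "nat \<Rightarrow> nat \<Rightarrow> complex mat \<Rightarrow> complex mat" where
  "reorder m n M = mat (m * n * (m * n)) (m * n * (m * n))
     (\<lambda>(r, c). M $$ (reorder_idx m n r, reorder_idx m n c))"

(* the state rho, as an operator on H_A (x) H_B with H_A = H_B = C^2 (x) C^d *)
definition rho :: "nat \<Rightarrow> real \<Rightarrow> real \<Rightarrow> real \<Rightarrow> complex mat" where
  "rho d x y z = reorder 2 d
     (kron (Qtilde 2) (Qtilde d)
      + complex_of_real x \<cdot>\<^sub>m kron (maxent_proj 2) (Qtilde d)
      + complex_of_real y \<cdot>\<^sub>m kron (Qtilde 2) (maxent_proj d)
      + complex_of_real z \<cdot>\<^sub>m kron (maxent_proj 2) (maxent_proj d))"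

definition separable :: "nat \<Rightarrow> nat \<Rightarrow> complex mat \<Rightarrow> bool" where
  "separable na nb M \<longleftrightarrow> psd M \<and> M \<in> carrier_mat (na * nb) (na * nb) \<and>
     (\<exists>(K::nat) (p :: nat \<Rightarrow> real) (A :: nat \<Rightarrow> complex mat) (B :: nat \<Rightarrow> complex mat).
        (\<forall>j<K. 0 \<le> p j \<and> A j \<in> carrier_mat na na \<and> psd (A j)
                 \<and> B j \<in> carrier_mat nb nb \<and> psd (B j)) \<and>
        M = mat (na * nb) (na * nb)
              (\<lambda>rc. \<Sum>j<K. complex_of_real (p j) * kron (A j) (B j) $$ rc))"

end

(* The functional W(E) = tr (E (2 P_2 (x) 1 - d P_2 (x) P_d)), with the qubit factors written first,
   is nonnegative on separable operators.  For a product A (x) B it equals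
   tr (A_2 B_2^T) - tr (A B^T) / 2, where A_2 and B_2 are the reductions to the qubits, and this is
   nonnegative because every psd C on C^2 (x) C^d satisfies C <= 2 (C_2 (x) 1): a vector of
   C^2 (x) C^d has Schmidt rank at most 2.  On rho the functional takes the value 2x - (d - 2) z,
   which is negative when z > 2x / (d - 2). *)

theory Submission
  imports Defs
begin

lemma sum_lessThan_mult:
  fixes f :: "nat \<Rightarrow> 'a::comm_monoid_add"
  shows "(\<Sum>i<m * n. f i) = (\<Sum>a<m. \<Sum>k<n. f (a * n + k))"
proof -
  have "sum f {a * n..<a * n + n} = (\<Sum>k<n. f (a * n + k))" for a
    using sum.shift_bounds_nat_ivl[of f 0 "a * n" n]
    by (simp add: atLeast0LessThan add.commute)
  then show ?thesis
    using sum.nat_group[of f n m] by simp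
qed

lemma mult_add_less_mult:
  fixes k l m n :: nat
  assumes "k < m" "l < n"
  shows "k * n + l < m * n"
proof -
  have "k * n + l < Suc k * n"
    using assms(2) by simp
  also have "\<dots> \<le> m * n"
    using assms(1) by (intro mult_le_mono1) simp
  finally show ?thesis .
qed

lemma mod_Suc_diag_iff:
  fixes k l n :: nat
  assumes "k < n" "l < n"
  shows "(k * n + l) mod Suc n = 0 \<longleftrightarrow> l = k"
proof
  assume "(k * n + l) mod Suc n = 0"
  then have "int (Suc n) dvd int (k * n + l)"
    by (simp only: mod_eq_0_iff_dvd of_nat_dvd_iff)
  also have "int (k * n + l) = int k * int (Suc n) + (int l - int k)"
    by (simp add: algebra_simps)
  finally have "int (Suc n) dvd int k * int (Suc n) + (int l - int k)" .
  then have "int (Suc n) dvd int l - int k"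
    by (simp add: dvd_add_right_iff)
  with assms show "l = k"
    using dvd_imp_le_int[of "int l - int k" "int (Suc n)"] by linarith
next
  assume "l = k"
  then have "k * n + l = k * Suc n"
    by simp
  then show "(k * n + l) mod Suc n = 0"
    by (metis mod_mult_self2_is_0)
qed

section \<open>Positive semidefinite kernels\<close>

definition sesq ::
    "nat \<Rightarrow> (nat \<Rightarrow> nat \<Rightarrow> complex) \<Rightarrow> (nat \<Rightarrow> complex) \<Rightarrow> (nat \<Rightarrow> complex) \<Rightarrow> complex"
  where "sesq n M u v = (\<Sum>i<n. \<Sum>j<n. cnj (u i) * M i j * v j)"

definition psd_kernel :: "nat \<Rightarrow> (nat \<Rightarrow> nat \<Rightarrow> complex) \<Rightarrow> bool"
  where "psd_kernel n M \<longleftrightarrow> (\<forall>v. sesq n M v v \<in> \<real> \<and> 0 \<le> Re (sesq n M v v))"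

definition basis_vec :: "nat \<Rightarrow> nat \<Rightarrow> complex"
  where "basis_vec k = (\<lambda>i. if i = k then 1 else 0)"

lemma cnj_mult_self: "cnj z * z = complex_of_real ((cmod z)\<^sup>2)"
  using complex_norm_square[of z] by (simp add: mult.commute)

lemma sesq_lincomb:
  "sesq n M (\<lambda>i. a * u i + b * w i) (\<lambda>i. a' * u' i + b' * w' i) =
     cnj a * a' * sesq n M u u' + cnj a * b' * sesq n M u w'
     + cnj b * a' * sesq n M w u' + cnj b * b' * sesq n M w w'"
  unfolding sesq_def by (simp add: algebra_simps sum.distrib sum_distrib_left)

lemma sesq_add:
  "sesq n M (\<lambda>i. u i + w i) (\<lambda>i. u i + w i) =
     sesq n M u u + sesq n M u w + sesq n M w u + sesq n M w w"
  using sesq_lincomb[of n M 1 u 1 w 1 u 1 w] by simp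

lemma sesq_sum_left:
  "sesq n M (\<lambda>i. \<Sum>k\<in>K. f k * u k i) v = (\<Sum>k\<in>K. cnj (f k) * sesq n M (u k) v)"
  unfolding sesq_def
  by (simp add: sum_distrib_left sum_distrib_right algebra_simps sum.swap[of _ K])

lemma sesq_sum_right:
  "sesq n M v (\<lambda>i. \<Sum>k\<in>K. f k * u k i) = (\<Sum>k\<in>K. f k * sesq n M v (u k))"
  unfolding sesq_def
  by (simp add: sum_distrib_left sum_distrib_right algebra_simps sum.swap[of _ K])

lemma sesq_cong:
  assumes "\<And>i. i < n \<Longrightarrow> u i = u' i" "\<And>i. i < n \<Longrightarrow> v i = v' i"
  shows "sesq n M u v = sesq n M u' v'"
  unfolding sesq_def using assms by (intro sum.cong refl) auto

lemma sesq_basis_vec: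
  assumes "i < n" "j < n"
  shows "sesq n M (basis_vec i) (basis_vec j) = M i j"
  using assms unfolding sesq_def basis_vec_def
  by (simp add: if_distrib[of cnj] if_distrib[of "\<lambda>x. x * _"] if_distrib[of "\<lambda>x. _ * x"] cong: if_cong)

lemma sesq_two_basis_vecs:
  assumes "i < n" "j < n"
  shows "sesq n M (\<lambda>k. a * basis_vec i k + b * basis_vec j k)
                    (\<lambda>k. a * basis_vec i k + b * basis_vec j k) =
    cnj a * a * M i i + cnj a * b * M i j + cnj b * a * M j i + cnj b * b * M j j"
  unfolding sesq_lincomb using assms by (simp add: sesq_basis_vec)

lemma psd_kernel_hermitian:
  assumes "psd_kernel n M" "i < n" "j < n"
  shows "M j i = cnj (M i j)"
proof -
  let ?v = "\<lambda>a b k. a * basis_vec i k + b * basis_vec j k"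
  have real: "sesq n M (?v a b) (?v a b) \<in> \<real>" for a b
    using assms(1) unfolding psd_kernel_def by blast
  from real[of 1 1] real[of 1 \<i>] real[of 1 0] real[of 0 1] show ?thesis
    unfolding sesq_two_basis_vecs[OF assms(2,3)]
    by (simp add: complex_is_Real_iff complex_eq_iff)
qed

lemma psd_kernel_diag_Reals:
  assumes "psd_kernel n M" "i < n"
  shows "M i i \<in> \<real>" "0 \<le> Re (M i i)"
  using assms sesq_basis_vec[of i n i M] unfolding psd_kernel_def by metis+

lemma psd_kernel_zero_diag:
  assumes psd: "psd_kernel n M" and "i < n" "j < n" and zero: "M j j = 0"
  shows "M i j = 0"
proof (rule ccontr)
  assume nz: "M i j \<noteq> 0"
  define b where "b = - (M i i + 1) / M i j"
  let ?v = "\<lambda>k. 1 * basis_vec i k + b * basis_vec j k"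
  have b: "b * M i j = - (M i i + 1)"
    unfolding b_def using nz by simp
  have "cnj b * M j i = cnj (b * M i j)"
    using psd_kernel_hermitian[OF psd \<open>i < n\<close> \<open>j < n\<close>] by simp
  also have "\<dots> = - (M i i + 1)"
    unfolding b using psd_kernel_diag_Reals[OF psd \<open>i < n\<close>] by (simp add: Reals_cnj_iff)
  finally have "Re (sesq n M ?v ?v) = - Re (M i i) - 2"
    unfolding sesq_two_basis_vecs[OF \<open>i < n\<close> \<open>j < n\<close>] using b zero by simp
  moreover have "0 \<le> Re (sesq n M ?v ?v)"
    using psd unfolding psd_kernel_def by blast
  ultimately show False
    using psd_kernel_diag_Reals(2)[OF psd \<open>i < n\<close>] by linarith
qed

(* Also for M n n = 0, where the division yields 0. *)
lemma psd_kernel_schur_complement: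
  assumes psd: "psd_kernel (Suc n) M"
  shows "psd_kernel n (\<lambda>i j. M i j - M i n * M n j / M n n)"
  unfolding psd_kernel_def
proof
  fix v :: "nat \<Rightarrow> complex"
  define c where "c = M n n"
  define w where "w = (\<Sum>j<n. M n j * v j)"
  define t where "t = - w / c"
  have "cnj c = c"
    using psd_kernel_diag_Reals(1)[OF psd, of n] by (simp add: c_def Reals_cnj_iff)
  have col: "(\<Sum>i<n. cnj (v i) * M i n) = cnj w"
    unfolding w_def cnj_sum
    by (intro sum.cong refl) (simp add: psd_kernel_hermitian[OF psd, of _ n])
  have "sesq (Suc n) M (v(n := t)) (v(n := t))
      = sesq n M v v + (\<Sum>i<n. cnj (v i) * M i n) * t + cnj t * w + cnj t * c * t"
    unfolding sesq_def w_def c_def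
    by (simp add: sum.distrib sum_distrib_left sum_distrib_right algebra_simps)
  also have "\<dots> = sesq n M v v - cnj w * w / c"
    unfolding col t_def using \<open>cnj c = c\<close> by (cases "c = 0") (simp_all add: field_simps)
  also have "\<dots> = sesq n (\<lambda>i j. M i j - M i n * M n j / M n n) v v"
    unfolding sesq_def c_def w_def col[unfolded w_def, symmetric]
    by (simp add: sum_distrib_left sum_distrib_right algebra_simps sum_subtractf sum_divide_distrib)
  finally show "sesq n (\<lambda>i j. M i j - M i n * M n j / M n n) v v \<in> \<real> \<and>
      0 \<le> Re (sesq n (\<lambda>i j. M i j - M i n * M n j / M n n) v v)"
    using psd unfolding psd_kernel_def by metis
qed

lemma psd_kernel_gram:
  "psd_kernel n M \<Longrightarrow> \<exists>V. \<forall>i<n. \<forall>j<n. M i j = (\<Sum>m<n. V m i * cnj (V m j))"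
proof (induction n arbitrary: M)
  case 0
  show ?case by simp
next
  case (Suc n)
  note psd = Suc.prems
  define c where "c = M n n"
  obtain V' where V': "\<forall>i<n. \<forall>j<n. M i j - M i n * M n j / c = (\<Sum>m<n. V' m i * cnj (V' m j))"
    using Suc.IH[OF psd_kernel_schur_complement[OF psd]] unfolding c_def by blast
  define s where "s = complex_of_real (sqrt (Re c))"
  have c_real: "c = complex_of_real (Re c)"
    using psd_kernel_diag_Reals(1)[OF psd, of n] by (simp add: c_def complex_is_Real_iff complex_eq_iff)
  have s: "s * cnj s = c"
    unfolding s_def using psd_kernel_diag_Reals(2)[OF psd, of n]
    by (subst c_real) (simp add: c_def flip: of_real_mult)
  define V where "V = (\<lambda>m i. if m < n then (if i < n then V' m i else 0) else M i n / s)"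
  have herm: "M n j = cnj (M j n)" if "j < Suc n" for j
    using psd_kernel_hermitian[OF psd that] by simp
  have last: "V n i * cnj (V n j) = M i n * M n j / c" if "j < Suc n" for i j
    unfolding V_def using herm[OF that] s by (simp add: field_simps)
  have col_zero: "M i n = 0" "M n i = 0" if "c = 0" "i < Suc n" for i
    using psd_kernel_zero_diag[OF psd \<open>i < Suc n\<close>, of n] herm[OF \<open>i < Suc n\<close>] that
    by (simp_all add: c_def)
  show ?case
  proof (intro exI allI impI)
    fix i j assume "i < Suc n" "j < Suc n"
    have "(\<Sum>m<n. V m i * cnj (V m j)) = (if i < n \<and> j < n then M i j - M i n * M n j / c else 0)"
      using V' unfolding V_def by (cases "i < n \<and> j < n") auto
    then have "(\<Sum>m<Suc n. V m i * cnj (V m j))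
        = (if i < n \<and> j < n then M i j - M i n * M n j / c else 0) + M i n * M n j / c"
      using last[OF \<open>j < Suc n\<close>] by simp
    also have "\<dots> = M i j"
      using \<open>i < Suc n\<close> \<open>j < Suc n\<close> col_zero[of i] col_zero[of j]
      by (cases "c = 0") (auto simp: less_Suc_eq c_def)
    finally show "M i j = (\<Sum>m<Suc n. V m i * cnj (V m j))" ..
  qed
qed

lemma sesq_cross_le:
  assumes "psd_kernel n M"
  shows "Re (cnj p * q * sesq n M u w + cnj q * p * sesq n M w u)
     \<le> (cmod q)\<^sup>2 * Re (sesq n M u u) + (cmod p)\<^sup>2 * Re (sesq n M w w)"
proof -
  have pos: "0 \<le> Re (sesq n M v v)" for v
    using assms unfolding psd_kernel_def by blast
  have polar: "sgn z * complex_of_real (cmod z) = z" for z :: complex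
    by (cases "z = 0") (auto simp: sgn_div_norm scaleR_conv_of_real)
  have sgn_le: "cmod (sgn z) \<le> 1" for z :: complex
    by (cases "z = 0") (auto simp: sgn_div_norm norm_divide)
  define a where "a = sgn p * complex_of_real (cmod q)"
  define b where "b = sgn q * complex_of_real (cmod p)"
  have "cnj a * b = cnj (sgn p * complex_of_real (cmod p)) * (sgn q * complex_of_real (cmod q))"
       "cnj b * a = cnj (sgn q * complex_of_real (cmod q)) * (sgn p * complex_of_real (cmod p))"
    unfolding a_def b_def by (simp_all add: algebra_simps)
  then have ab: "cnj a * b = cnj p * q" "cnj b * a = cnj q * p"
    by (simp_all add: polar)
  have norms: "(cmod a)\<^sup>2 \<le> (cmod q)\<^sup>2" "(cmod b)\<^sup>2 \<le> (cmod p)\<^sup>2"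
    unfolding a_def b_def norm_mult using sgn_le[of p] sgn_le[of q]
    by (simp_all add: power_mult_distrib mult_left_le_one_le power_le_one)
  have "0 \<le> Re (sesq n M (\<lambda>i. a * u i + (- b) * w i) (\<lambda>i. a * u i + (- b) * w i))"
    by (rule pos)
  also have "\<dots> = (cmod a)\<^sup>2 * Re (sesq n M u u) + (cmod b)\<^sup>2 * Re (sesq n M w w)
      - Re (cnj p * q * sesq n M u w + cnj q * p * sesq n M w u)"
    unfolding sesq_lincomb ab[symmetric] by (simp add: cmod_power2) (simp add: power2_eq_square)
  finally have "Re (cnj p * q * sesq n M u w + cnj q * p * sesq n M w u)
      \<le> (cmod a)\<^sup>2 * Re (sesq n M u u) + (cmod b)\<^sup>2 * Re (sesq n M w w)"
    by simp
  also have "\<dots> \<le> (cmod q)\<^sup>2 * Re (sesq n M u u) + (cmod p)\<^sup>2 * Re (sesq n M w w)"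
    by (intro add_mono mult_right_mono norms pos)
  finally show ?thesis .
qed

lemma sesq_add_le:
  assumes "psd_kernel n M"
  shows "Re (sesq n M (\<lambda>i. u i + w i) (\<lambda>i. u i + w i))
     \<le> 2 * Re (sesq n M u u) + 2 * Re (sesq n M w w)"
  using sesq_cross_le[OF assms, of 1 1 u w] unfolding sesq_add by simp

lemma sesq_sum_le:
  assumes "psd_kernel n M"
  shows "Re (sesq n M (\<lambda>i. \<Sum>k<m. f k * u k i) (\<lambda>i. \<Sum>k<m. f k * u k i))
     \<le> (\<Sum>k<m. (cmod (f k))\<^sup>2) * (\<Sum>k<m. Re (sesq n M (u k) (u k)))"
proof -
  define S where "S = (\<lambda>k k'. sesq n M (u k) (u k'))"
  have expand: "sesq n M (\<lambda>i. \<Sum>k<m. f k * u k i) (\<lambda>i. \<Sum>k<m. f k * u k i)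
      = (\<Sum>k<m. \<Sum>k'<m. cnj (f k) * f k' * S k k')"
    unfolding sesq_sum_left sesq_sum_right S_def by (simp add: sum_distrib_left algebra_simps)
  have "(\<Sum>k<m. \<Sum>k'<m. Re (cnj (f k') * f k * S k' k)) = (\<Sum>k<m. \<Sum>k'<m. Re (cnj (f k) * f k' * S k k'))"
    by (rule sum.swap)
  then have "2 * Re (\<Sum>k<m. \<Sum>k'<m. cnj (f k) * f k' * S k k')
      = (\<Sum>k<m. \<Sum>k'<m. Re (cnj (f k) * f k' * S k k' + cnj (f k') * f k * S k' k))"
    by (simp add: Re_sum sum.distrib)
  also have "\<dots> \<le> (\<Sum>k<m. \<Sum>k'<m. (cmod (f k'))\<^sup>2 * Re (S k k) + (cmod (f k))\<^sup>2 * Re (S k' k'))"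
    unfolding S_def by (intro sum_mono sesq_cross_le assms)
  also have "\<dots> = (\<Sum>k<m. Re (S k k) * (\<Sum>k'<m. (cmod (f k'))\<^sup>2))
      + (\<Sum>k<m. (cmod (f k))\<^sup>2 * (\<Sum>k'<m. Re (S k' k')))"
    by (simp add: sum.distrib sum_distrib_left mult.commute)
  also have "\<dots> = 2 * ((\<Sum>k<m. (cmod (f k))\<^sup>2) * (\<Sum>k<m. Re (S k k)))"
    by (simp add: sum_distrib_right[symmetric] mult.commute)
  finally show ?thesis
    unfolding expand S_def by simp
qed

definition tensor_vec :: "nat \<Rightarrow> (nat \<Rightarrow> complex) \<Rightarrow> (nat \<Rightarrow> complex) \<Rightarrow> nat \<Rightarrow> complex"
  where "tensor_vec n h f = (\<lambda>i. h (i div n) * f (i mod n))"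

lemma tensor_vec_basis_vec_expand:
  assumes "0 < n"
  shows "tensor_vec n h f i = (\<Sum>k<n. f k * tensor_vec n h (basis_vec k) i)"
  using assms by (simp add: tensor_vec_def basis_vec_def if_distrib[of "\<lambda>x. _ * x"] cong: if_cong)

lemma sesq_tensor_basis_vecs:
  assumes "k < n" "k' < n"
  shows "sesq (m * n) M (tensor_vec n h (basis_vec k)) (tensor_vec n h' (basis_vec k'))
    = (\<Sum>a<m. \<Sum>a'<m. cnj (h a) * M (a * n + k) (a' * n + k') * h' a')"
proof -
  have sum_if: "(\<Sum>x\<in>A. if P then g x else 0) = (if P then sum g A else 0)"
    for P A and g :: "nat \<Rightarrow> complex"
    by simp
  show ?thesis
    using assms unfolding sesq_def sum_lessThan_mult tensor_vec_def basis_vec_def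
    by (simp add: sum_if if_distrib[of cnj] if_distrib[of "\<lambda>x. x * _"] if_distrib[of "\<lambda>x. _ * x"]
        cong: if_cong)
qed

(* In operator form: |g><g| <= 2 (tr_d |g><g|) (x) 1 on C^2 (x) C^d.  Writing
   g = (1, c) (x) g_0 + (0, 1) (x) w with w orthogonal to g_0, both product terms are handled by
   the Cauchy-Schwarz bound sesq_sum_le, and the orthogonality kills the cross terms. *)
lemma sesq_le_twice_reduced:
  assumes psd: "psd_kernel (2 * d) M"
  shows "Re (sesq (2 * d) M g g)
    \<le> 2 * (\<Sum>k<d. \<Sum>l<d. Re (sesq (2 * d) M (tensor_vec d (\<lambda>a. g (a * d + l)) (basis_vec k))
                                         (tensor_vec d (\<lambda>a. g (a * d + l)) (basis_vec k))))"
proof -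
  define D where "D = (\<Sum>l<d. cnj (g l) * g l)"
  define c where "c = (\<Sum>l<d. cnj (g l) * g (d + l)) / D"
  define w where "w = (\<lambda>l. g (d + l) - c * g l)"
  have orth: "(\<Sum>l<d. cnj (g l) * w l) = 0"
  proof (cases "\<forall>l<d. g l = 0")
    case True
    then show ?thesis by simp
  next
    case False
    have "D = complex_of_real (\<Sum>l<d. (cmod (g l))\<^sup>2)"
      unfolding D_def cnj_mult_self by simp
    moreover have "(\<Sum>l<d. (cmod (g l))\<^sup>2) \<noteq> 0"
      using False by (subst sum_nonneg_eq_0_iff) auto
    ultimately have "D \<noteq> 0"
      by (metis of_real_eq_0_iff)
    have "(\<Sum>l<d. cnj (g l) * w l) = (\<Sum>l<d. cnj (g l) * g (d + l)) - c * D"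
      unfolding w_def D_def by (simp add: algebra_simps sum_subtractf sum_distrib_left)
    then show ?thesis
      unfolding c_def using \<open>D \<noteq> 0\<close> by simp
  qed
  have orth': "(\<Sum>l<d. cnj (w l) * g l) = 0"
    using arg_cong[OF orth, of cnj] by (simp add: mult.commute)
  define E where "E = (\<lambda>k. tensor_vec d (\<lambda>a. if a = 0 then 1 else c) (basis_vec k))"
  define F where "F = (\<lambda>k. tensor_vec d (\<lambda>a. if a = 0 then 0 else 1) (basis_vec k))"
  define S where "S = (\<lambda>k l. tensor_vec d (\<lambda>a. g (a * d + l)) (basis_vec k))"
  define Q where "Q = (\<lambda>u. Re (sesq (2 * d) M u u))"
  have upper_half: "i div d = 1" "d + i mod d = i" if "d \<le> i" "i < 2 * d" for i
    using that by (simp_all add: le_div_geq le_mod_geq)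
  have g_split: "g i = (\<Sum>k<d. g k * E k i) + (\<Sum>k<d. w k * F k i)" if "i < 2 * d" for i
  proof -
    have "0 < d" using that by simp
    then show ?thesis
      using that upper_half[of i]
      unfolding E_def F_def tensor_vec_basis_vec_expand[OF \<open>0 < d\<close>, symmetric]
      by (cases "i < d") (auto simp: tensor_vec_def w_def)
  qed
  have S_split: "S k l i = g l * E k i + w l * F k i" if "i < 2 * d" for i k l
    using that upper_half[of i] unfolding S_def E_def F_def tensor_vec_def w_def
    by (cases "i < d") (auto simp: algebra_simps)
  have S_form: "sesq (2 * d) M (S k l) (S k l)
      = cnj (g l) * g l * sesq (2 * d) M (E k) (E k) + cnj (g l) * w l * sesq (2 * d) M (E k) (F k)
        + cnj (w l) * g l * sesq (2 * d) M (F k) (E k) + cnj (w l) * w l * sesq (2 * d) M (F k) (F k)"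
    for k l
    unfolding sesq_lincomb[symmetric] by (intro sesq_cong S_split)
  have S_sum: "(\<Sum>l<d. Q (S k l))
      = (\<Sum>l<d. (cmod (g l))\<^sup>2) * Q (E k) + (\<Sum>l<d. (cmod (w l))\<^sup>2) * Q (F k)" for k
  proof -
    have "(\<Sum>l<d. sesq (2 * d) M (S k l) (S k l))
        = (\<Sum>l<d. cnj (g l) * g l) * sesq (2 * d) M (E k) (E k)
          + (\<Sum>l<d. cnj (g l) * w l) * sesq (2 * d) M (E k) (F k)
          + (\<Sum>l<d. cnj (w l) * g l) * sesq (2 * d) M (F k) (E k)
          + (\<Sum>l<d. cnj (w l) * w l) * sesq (2 * d) M (F k) (F k)"
      unfolding S_form by (simp add: sum.distrib sum_distrib_right)
    then show ?thesis
      unfolding Q_def orth orth' cnj_mult_self by (simp add: Re_sum[symmetric])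
  qed
  have "Q g = Q (\<lambda>i. (\<Sum>k<d. g k * E k i) + (\<Sum>k<d. w k * F k i))"
    unfolding Q_def by (simp only: sesq_cong[OF g_split g_split])
  also have "\<dots> \<le> 2 * Q (\<lambda>i. \<Sum>k<d. g k * E k i) + 2 * Q (\<lambda>i. \<Sum>k<d. w k * F k i)"
    unfolding Q_def by (rule sesq_add_le[OF psd])
  also have "\<dots> \<le> 2 * ((\<Sum>l<d. (cmod (g l))\<^sup>2) * (\<Sum>k<d. Q (E k)))
      + 2 * ((\<Sum>l<d. (cmod (w l))\<^sup>2) * (\<Sum>k<d. Q (F k)))"
    unfolding Q_def by (intro add_mono mult_left_mono sesq_sum_le[OF psd]) simp_all
  also have "\<dots> = 2 * (\<Sum>k<d. \<Sum>l<d. Q (S k l))"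
    unfolding S_sum sum.distrib sum_distrib_left[symmetric] by (simp only: distrib_left)
  finally show ?thesis
    unfolding Q_def S_def .
qed

section \<open>The witness\<close>

(* Index of |a,k> (x) |b,l> in H_A (x) H_B, with qubit indices a, b and qudit indices k, l. *)
definition joint_idx :: "nat \<Rightarrow> nat \<Rightarrow> nat \<Rightarrow> nat \<Rightarrow> nat \<Rightarrow> nat"
  where "joint_idx d a k b l = (a * d + k) * (2 * d) + (b * d + l)"

(* W(E) = sum_{k,l} <psi_kl|E|psi_kl> - <Psi|E|Psi> / 2 with psi_kl = sum_a |a,k>|a,l> and
   Psi = sum_{a,k} |a,k>|a,k>. *)
definition witness :: "nat \<Rightarrow> (nat \<times> nat \<Rightarrow> complex) \<Rightarrow> complex"
  where "witness d E =
    (\<Sum>k<d. \<Sum>l<d. \<Sum>a<2. \<Sum>a'<2. E (joint_idx d a k a l, joint_idx d a' k a' l))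
    - (\<Sum>a<2. \<Sum>k<d. \<Sum>a'<2. \<Sum>k'<d. E (joint_idx d a k a k, joint_idx d a' k' a' k')) / 2"

lemma joint_idx_less:
  assumes "a < 2" "b < 2" "k < d" "l < d"
  shows "joint_idx d a k b l < 2 * d * (2 * d)"
  unfolding joint_idx_def using assms by (intro mult_add_less_mult) (simp_all add: mult_add_less_mult)

lemma joint_idx_div_mod:
  assumes "b < 2" "l < d"
  shows "joint_idx d a k b l div (2 * d) = a * d + k" "joint_idx d a k b l mod (2 * d) = b * d + l"
  using mult_add_less_mult[OF assms] unfolding joint_idx_def by simp_all

lemma witness_cong:
  assumes "\<And>a a' k l k' l'. a < 2 \<Longrightarrow> a' < 2 \<Longrightarrow> k < d \<Longrightarrow> l < d \<Longrightarrow>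
     k' < d \<Longrightarrow> l' < d \<Longrightarrow>
     E (joint_idx d a k a l, joint_idx d a' k' a' l') = E' (joint_idx d a k a l, joint_idx d a' k' a' l')"
  shows "witness d E = witness d E'"
  unfolding witness_def using assms by (intro arg_cong2[where f = "\<lambda>x y. x - y / 2"] sum.cong refl) auto

lemma witness_add: "witness d (\<lambda>rc. E rc + E' rc) = witness d E + witness d E'"
  unfolding witness_def by (simp add: sum.distrib algebra_simps add_divide_distrib)

lemma witness_scale: "witness d (\<lambda>rc. c * E rc) = c * witness d E"
  unfolding witness_def by (simp add: sum_distrib_left algebra_simps)

lemma witness_sum: "witness d (\<lambda>rc. \<Sum>j\<in>J. E j rc) = (\<Sum>j\<in>J. witness d (E j))"
  unfolding witness_def
  by (simp add: sum_subtractf sum_divide_distrib sum.swap[of _ J])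

lemma witness_rank_one:
  "witness d (\<lambda>(r, c). A (r div (2 * d)) (c div (2 * d))
                         * (v (r mod (2 * d)) * cnj (v (c mod (2 * d)))))
   = (\<Sum>k<d. \<Sum>l<d. sesq (2 * d) A (tensor_vec d (\<lambda>a. cnj (v (a * d + l))) (basis_vec k))
                                      (tensor_vec d (\<lambda>a. cnj (v (a * d + l))) (basis_vec k)))
     - sesq (2 * d) A (\<lambda>i. cnj (v i)) (\<lambda>i. cnj (v i)) / 2"
  unfolding witness_def sesq_def[of "2 * d" A "\<lambda>i. cnj (v i)"] sum_lessThan_mult
  by (intro arg_cong2[where f = "\<lambda>x y. x - y / 2"] sum.cong refl)
    (simp_all add: sesq_tensor_basis_vecs joint_idx_div_mod, simp_all only: ac_simps)

lemma dim_kron [simp]: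
  "dim_row (kron A B) = dim_row A * dim_row B" "dim_col (kron A B) = dim_col A * dim_col B"
  unfolding kron_def by simp_all

lemma index_kron:
  assumes "i < dim_row A * dim_row B" "j < dim_col A * dim_col B"
  shows "kron A B $$ (i, j)
    = A $$ (i div dim_row B, j div dim_col B) * B $$ (i mod dim_row B, j mod dim_col B)"
  using assms unfolding kron_def by simp

lemma psd_kernel_of_psd:
  assumes "psd A" "A \<in> carrier_mat n n"
  shows "psd_kernel n (\<lambda>i j. A $$ (i, j))"
  using assms unfolding psd_def psd_kernel_def sesq_def Let_def by auto

lemma witness_kron_nonneg:
  assumes "psd A" "A \<in> carrier_mat (2 * d) (2 * d)" and "psd B" "B \<in> carrier_mat (2 * d) (2 * d)"
  shows "0 \<le> Re (witness d (\<lambda>rc. kron A B $$ rc))"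
proof -
  let ?A = "\<lambda>i j. A $$ (i, j)"
  have psd_A: "psd_kernel (2 * d) ?A"
    using psd_kernel_of_psd[OF assms(1,2)] .
  obtain V where V: "\<forall>i<2 * d. \<forall>j<2 * d. B $$ (i, j) = (\<Sum>m<2 * d. V m i * cnj (V m j))"
    using psd_kernel_gram[OF psd_kernel_of_psd[OF assms(3,4)]] by blast
  define R where "R = (\<lambda>m (r, c). ?A (r div (2 * d)) (c div (2 * d))
                                     * (V m (r mod (2 * d)) * cnj (V m (c mod (2 * d)))))"
  have "witness d (\<lambda>rc. kron A B $$ rc) = witness d (\<lambda>rc. \<Sum>m<2 * d. R m rc)"
  proof (rule witness_cong)
    fix a a' k l k' l' :: nat
    assume "a < 2" "a' < 2" "k < d" "l < d" "k' < d" "l' < d"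
    then show "kron A B $$ (joint_idx d a k a l, joint_idx d a' k' a' l')
        = (\<Sum>m<2 * d. R m (joint_idx d a k a l, joint_idx d a' k' a' l'))"
      using assms(2,4) V joint_idx_less joint_idx_div_mod mult_add_less_mult[of _ 2 _ d]
      by (simp add: index_kron R_def sum_distrib_left)
  qed
  also have "\<dots> = (\<Sum>m<2 * d. witness d (R m))"
    by (rule witness_sum)
  finally have "Re (witness d (\<lambda>rc. kron A B $$ rc)) = (\<Sum>m<2 * d. Re (witness d (R m)))"
    by (simp add: Re_sum)
  also have "\<dots> \<ge> 0"
  proof (intro sum_nonneg)
    fix m
    show "0 \<le> Re (witness d (R m))"
      unfolding R_def witness_rank_one[of d ?A "V m"]
      using sesq_le_twice_reduced[OF psd_A, of "\<lambda>i. cnj (V m i)"] by (simp add: Re_sum)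
  qed
  finally show ?thesis .
qed

lemma witness_separable_nonneg:
  assumes "separable (2 * d) (2 * d) M"
  shows "0 \<le> Re (witness d (\<lambda>rc. M $$ rc))"
proof -
  obtain K :: nat and p :: "nat \<Rightarrow> real" and A B :: "nat \<Rightarrow> complex mat" where
    terms: "\<forall>j<K. 0 \<le> p j \<and> A j \<in> carrier_mat (2 * d) (2 * d) \<and> psd (A j)
                 \<and> B j \<in> carrier_mat (2 * d) (2 * d) \<and> psd (B j)" and
    M: "M = mat (2 * d * (2 * d)) (2 * d * (2 * d))
              (\<lambda>rc. \<Sum>j<K. complex_of_real (p j) * kron (A j) (B j) $$ rc)"
    using assms unfolding separable_def by (elim conjE exE) (rule that; assumption)
  have "witness d (\<lambda>rc. M $$ rc)
      = witness d (\<lambda>rc. \<Sum>j<K. complex_of_real (p j) * kron (A j) (B j) $$ rc)"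
    unfolding M by (intro witness_cong) (use joint_idx_less in simp)
  also have "\<dots> = (\<Sum>j<K. complex_of_real (p j) * witness d (\<lambda>rc. kron (A j) (B j) $$ rc))"
    by (simp only: witness_sum witness_scale)
  finally have "Re (witness d (\<lambda>rc. M $$ rc))
      = (\<Sum>j<K. p j * Re (witness d (\<lambda>rc. kron (A j) (B j) $$ rc)))"
    by (simp add: Re_sum)
  also have "\<dots> \<ge> 0"
    using terms by (intro sum_nonneg mult_nonneg_nonneg witness_kron_nonneg) auto
  finally show ?thesis .
qed

section \<open>Evaluation at rho\<close>

lemma reorder_idx_split:
  assumes "a < m" "b < m" "k < n" "l < n"
  shows "reorder_idx m n ((a * n + k) * (m * n) + (b * n + l)) = (a * m + b) * (n * n) + (k * n + l)"
proof -
  define i where "i = (a * n + k) * (m * n) + (b * n + l)"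
  have i: "i = ((a * n + k) * m + b) * n + l"
    unfolding i_def by (simp add: algebra_simps)
  have div_n: "i div n = (a * n + k) * m + b"
    unfolding i using assms by simp
  have div_nm: "i div (n * m) = a * n + k"
    unfolding div_mult2_eq div_n using assms by simp
  have "i mod n = l"
    unfolding i using assms by simp
  moreover have "(i div n) mod m = b"
    unfolding div_n using assms by simp
  moreover have "(i div (n * m)) mod n = k"
    unfolding div_nm using assms by simp
  moreover have "i div (n * m * n) = a"
    unfolding div_mult2_eq[of i "n * m" n] div_nm using assms by simp
  ultimately show ?thesis
    unfolding i_def[symmetric] reorder_idx_def Let_def by simp
qed

lemma reorder_joint_idx:
  assumes "a < 2" "b < 2" "k < d" "l < d"
  shows "reorder_idx 2 d (joint_idx d a k b l) = (a * 2 + b) * (d * d) + (k * d + l)"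
  using assms unfolding joint_idx_def by (rule reorder_idx_split)

lemma reorder_joint_idx_less:
  assumes "a < 2" "b < 2" "k < d" "l < d"
  shows "reorder_idx 2 d (joint_idx d a k b l) < 2 * 2 * (d * d)"
  unfolding reorder_joint_idx[OF assms] using assms by (intro mult_add_less_mult) simp_all

lemma index_kron_split:
  assumes "i < dim_row X" "i' < dim_col X" "j < dim_row Y" "j' < dim_col Y"
  shows "kron X Y $$ (i * dim_row Y + j, i' * dim_col Y + j') = X $$ (i, i') * Y $$ (j, j')"
  using assms by (simp add: index_kron mult_add_less_mult)

definition mat_trace :: "complex mat \<Rightarrow> complex"
  where "mat_trace Y = (\<Sum>i<dim_row Y. Y $$ (i, i))"

(* n <Phi_n|Y|Phi_n> *)
definition maxent_form :: "nat \<Rightarrow> complex mat \<Rightarrow> complex"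
  where "maxent_form n Y = (\<Sum>k<n. \<Sum>k'<n. Y $$ (k * n + k, k' * n + k'))"

lemma witness_reorder_kron:
  assumes "X \<in> carrier_mat 4 4" "Y \<in> carrier_mat (d * d) (d * d)"
  shows "witness d (\<lambda>(r, c). kron X Y $$ (reorder_idx 2 d r, reorder_idx 2 d c))
    = maxent_form 2 X * (mat_trace Y - maxent_form d Y / 2)"
proof -
  have entry: "kron X Y $$ (reorder_idx 2 d (joint_idx d a k b l), reorder_idx 2 d (joint_idx d a' k' b' l'))
      = X $$ (a * 2 + b, a' * 2 + b') * Y $$ (k * d + l, k' * d + l')"
    if "a < 2" "b < 2" "k < d" "l < d" "a' < 2" "b' < 2" "k' < d" "l' < d" for a b k l a' b' k' l'
    using that assms index_kron_split[of "a * 2 + b" X "a' * 2 + b'" "k * d + l" Y "k' * d + l'"]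
    by (simp add: reorder_joint_idx mult_add_less_mult)
  have "mat_trace Y = (\<Sum>k<d. \<Sum>l<d. Y $$ (k * d + l, k * d + l))"
    unfolding mat_trace_def using assms(2) by (simp add: sum_lessThan_mult)
  then have first: "(\<Sum>k<d. \<Sum>l<d. \<Sum>a<2. \<Sum>a'<2. X $$ (a * 2 + a, a' * 2 + a') * Y $$ (k * d + l, k * d + l))
      = maxent_form 2 X * mat_trace Y"
    unfolding maxent_form_def by (simp only: sum_distrib_left sum_distrib_right)
  have second: "(\<Sum>a<2. \<Sum>k<d. \<Sum>a'<2. \<Sum>k'<d. X $$ (a * 2 + a, a' * 2 + a') * Y $$ (k * d + k, k' * d + k'))
      = maxent_form 2 X * maxent_form d Y"
    unfolding maxent_form_def by (simp only: sum_product)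
  have "witness d (\<lambda>(r, c). kron X Y $$ (reorder_idx 2 d r, reorder_idx 2 d c))
      = (\<Sum>k<d. \<Sum>l<d. \<Sum>a<2. \<Sum>a'<2. X $$ (a * 2 + a, a' * 2 + a') * Y $$ (k * d + l, k * d + l))
        - (\<Sum>a<2. \<Sum>k<d. \<Sum>a'<2. \<Sum>k'<d. X $$ (a * 2 + a, a' * 2 + a') * Y $$ (k * d + k, k' * d + k')) / 2"
    unfolding witness_def by (intro arg_cong2[where f = "\<lambda>x y. x - y / 2"] sum.cong refl) (simp_all add: entry)
  then show ?thesis
    unfolding first second by (simp add: algebra_simps)
qed

lemma dim_maxent_proj [simp]:
  "dim_row (maxent_proj n) = n * n" "dim_col (maxent_proj n) = n * n"
  unfolding maxent_proj_def by simp_all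

lemma dim_Qtilde [simp]:
  "dim_row (Qtilde n) = n * n" "dim_col (Qtilde n) = n * n"
  unfolding Qtilde_def by simp_all

lemma maxent_proj_carrier: "maxent_proj n \<in> carrier_mat (n * n) (n * n)"
  by (simp add: carrier_matI)

lemma Qtilde_carrier: "Qtilde n \<in> carrier_mat (n * n) (n * n)"
  by (simp add: carrier_matI)

lemma index_maxent_proj:
  assumes "i < n * n" "j < n * n"
  shows "maxent_proj n $$ (i, j) = (if i mod Suc n = 0 \<and> j mod Suc n = 0 then 1 / of_nat n else 0)"
  using assms unfolding maxent_proj_def by simp

lemma index_Qtilde:
  assumes "i < n * n" "j < n * n"
  shows "Qtilde n $$ (i, j) = (of_bool (i = j) - maxent_proj n $$ (i, j)) / (of_nat (n * n) - 1)"
  using assms maxent_proj_carrier[of n] unfolding Qtilde_def by simp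

lemma maxent_proj_diag_blocks:
  assumes "k < n" "k' < n"
  shows "maxent_proj n $$ (k * n + k, k' * n + k') = 1 / of_nat n"
  using assms by (simp add: index_maxent_proj mult_add_less_mult mod_Suc_diag_iff)

lemma maxent_form_maxent_proj:
  assumes "0 < n"
  shows "maxent_form n (maxent_proj n) = of_nat n"
  using assms unfolding maxent_form_def by (simp add: maxent_proj_diag_blocks)

lemma maxent_form_Qtilde: "maxent_form n (Qtilde n) = 0"
proof (cases "n = 0")
  case False
  have diag_inj: "k * n + k = k' * n + k' \<longleftrightarrow> k = k'" for k k'
    using mult_cancel1[of "Suc n" k k'] by (simp add: algebra_simps)
  have "maxent_form n (Qtilde n) = (\<Sum>k<n. \<Sum>k'<n. of_bool (k = k') - 1 / of_nat n) / (of_nat (n * n) - 1)"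
    unfolding maxent_form_def
    by (simp add: index_Qtilde mult_add_less_mult maxent_proj_diag_blocks diag_inj sum_divide_distrib)
  also have "(\<Sum>k<n. \<Sum>k'<n. of_bool (k = k') - 1 / of_nat n) = (0 :: complex)"
    using False by (simp add: sum_subtractf)
  finally show ?thesis by simp
qed (simp add: maxent_form_def)

lemma mat_trace_maxent_proj:
  assumes "0 < n"
  shows "mat_trace (maxent_proj n) = 1"
proof -
  have "mat_trace (maxent_proj n) = (\<Sum>k<n. \<Sum>l<n. if l = k then 1 / of_nat n else 0)"
    unfolding mat_trace_def dim_maxent_proj sum_lessThan_mult
    by (intro sum.cong refl) (simp add: index_maxent_proj mult_add_less_mult mod_Suc_diag_iff)
  also have "\<dots> = 1"
    using assms by simp
  finally show ?thesis .
qed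

lemma mat_trace_Qtilde:
  assumes "2 \<le> n"
  shows "mat_trace (Qtilde n) = 1"
proof -
  have "mat_trace (Qtilde n) = (\<Sum>i<n * n. 1 - maxent_proj n $$ (i, i)) / (of_nat (n * n) - 1)"
    unfolding mat_trace_def by (simp add: index_Qtilde sum_divide_distrib)
  also have "(\<Sum>i<n * n. 1 - maxent_proj n $$ (i, i)) = of_nat (n * n) - 1"
    using mat_trace_maxent_proj[of n] assms by (simp add: sum_subtractf mat_trace_def)
  also have "(of_nat (n * n) - 1) / (of_nat (n * n) - 1) = (1 :: complex)"
  proof -
    have "n * n \<noteq> 1"
      using mult_le_mono[OF assms assms] by auto
    then show ?thesis
      by (simp del: of_nat_mult)
  qed
  finally show ?thesis .
qed

lemma witness_rho:
  assumes "2 \<le> d"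
  shows "witness d (\<lambda>rc. rho d x y z $$ rc) = complex_of_real (2 * x + 2 * z - real d * z)"
proof -
  define K where "K = (\<lambda>X Y (r, c). kron X Y $$ (reorder_idx 2 d r, reorder_idx 2 d c))"
  have "witness d (\<lambda>rc. rho d x y z $$ rc) = witness d (\<lambda>rc.
      K (Qtilde 2) (Qtilde d) rc + complex_of_real x * K (maxent_proj 2) (Qtilde d) rc
      + complex_of_real y * K (Qtilde 2) (maxent_proj d) rc
      + complex_of_real z * K (maxent_proj 2) (maxent_proj d) rc)"
    unfolding rho_def reorder_def K_def
    by (intro witness_cong) (use joint_idx_less reorder_joint_idx_less in simp)
  also have "\<dots> = witness d (K (Qtilde 2) (Qtilde d))
      + complex_of_real x * witness d (K (maxent_proj 2) (Qtilde d))
      + complex_of_real y * witness d (K (Qtilde 2) (maxent_proj d))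
      + complex_of_real z * witness d (K (maxent_proj 2) (maxent_proj d))"
    by (simp only: witness_add witness_scale)
  also have "\<dots> = complex_of_real (2 * x + 2 * z - real d * z)"
    using assms maxent_proj_carrier[of 2] Qtilde_carrier[of 2] maxent_proj_carrier[of d] Qtilde_carrier[of d]
    unfolding K_def
    by (simp add: witness_reorder_kron maxent_form_maxent_proj maxent_form_Qtilde
        mat_trace_maxent_proj mat_trace_Qtilde) (simp add: algebra_simps)
  finally show ?thesis .
qed

theorem mainTheorem4:
  fixes d :: nat and x y z :: real
  assumes "d \<ge> 3" and "x \<ge> 0" and "y \<ge> 0" and "z \<ge> 0"
    and "z > 2 * x / (real d - 2)"
  shows "\<not> separable (2 * d) (2 * d) (rho d x y z)"
proof
  assume "separable (2 * d) (2 * d) (rho d x y z)"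
  then have "0 \<le> Re (witness d (\<lambda>rc. rho d x y z $$ rc))"
    by (rule witness_separable_nonneg)
  then have "0 \<le> 2 * x + 2 * z - real d * z"
    using witness_rho[of d x y z] \<open>d \<ge> 3\<close> by simp
  moreover have "2 * x < z * (real d - 2)"
    using \<open>z > 2 * x / (real d - 2)\<close> \<open>d \<ge> 3\<close> by (simp add: divide_less_eq)
  ultimately show False
    by (simp add: algebra_simps)
qed

end
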